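(* Let $S$ be a semiring. A left $S$-semimodule $P$ is $k$-projective if and only if every short exact sequence of left $S$-semimodules $0\to A\xrightarrow{f}B\xrightarrow{g}P\to0$ is right-splitting, i.e. there exists an $S$-linear $g':P\to B$ with $g\circ g'=\mathrm{id}_P$.
   Context: A semiring $(S,+,0,\cdot,1)$ consists of a commutative monoid $(S,+,0)$ and a monoid $(S,\cdot,1)$ with $0\neq 1$, absorbing zero and both distributive laws; left $S$-semimodules and $S$-linear maps are as for modules without subtraction. For an $S$-linear $h:X\to Y$, $\mathrm{Ker}(h)=\{x\mid h(x)=0\}$; $h$ is $k$-normal if $h(x)=h(x')$ implies $x+k=x'+k'$ for some $k,k'\in\mathrm{Ker}(h)$; a normal epimorphism is a surjective $k$-normal map. A short exact sequence $0\to A\xrightarrow{f}B\xrightarrow{g}C\to0$ means: $f$ injective, $f(A)=\mathrm{Ker}(g)$, $g$ surjective and $k$-normal. $P$ is $k$-projective if for every left $S$-semimodule $M$, every normal epimorphism $f:M\to N$ and every $S$-linear $g:P\to N$, there exists an $S$-linear $h:P\to M$ with $f\circ h=g$. *)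

theory Defs
  imports Main
begin

record ('s, 'm) semimodule =
  carrier :: "'m set"
  mzero   :: 'm
  madd    :: "'m \<Rightarrow> 'm \<Rightarrow> 'm"
  msmult  :: "'s \<Rightarrow> 'm \<Rightarrow> 'm"

definition is_semimodule :: "('s::semiring_1, 'm) semimodule \<Rightarrow> bool" where
  "is_semimodule M \<longleftrightarrow>
     mzero M \<in> carrier M \<and>
     (\<forall>x\<in>carrier M. \<forall>y\<in>carrier M. madd M x y \<in> carrier M) \<and>
     (\<forall>r. \<forall>x\<in>carrier M. msmult M r x \<in> carrier M) \<and>
     (\<forall>x\<in>carrier M. \<forall>y\<in>carrier M. \<forall>z\<in>carrier M.
        madd M (madd M x y) z = madd M x (madd M y z)) \<and>
     (\<forall>x\<in>carrier M. \<forall>y\<in>carrier M. madd M x y = madd M y x) \<and>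
     (\<forall>x\<in>carrier M. madd M (mzero M) x = x) \<and>
     (\<forall>r s. \<forall>x\<in>carrier M. msmult M (r * s) x = msmult M r (msmult M s x)) \<and>
     (\<forall>x\<in>carrier M. msmult M 1 x = x) \<and>
     (\<forall>r. \<forall>x\<in>carrier M. \<forall>y\<in>carrier M.
        msmult M r (madd M x y) = madd M (msmult M r x) (msmult M r y)) \<and>
     (\<forall>r s. \<forall>x\<in>carrier M. msmult M (r + s) x = madd M (msmult M r x) (msmult M s x)) \<and>
     (\<forall>x\<in>carrier M. msmult M 0 x = mzero M) \<and>
     (\<forall>r. msmult M r (mzero M) = mzero M)"

definition linear_map ::
  "('s::semiring_1, 'm) semimodule \<Rightarrow> ('s, 'n) semimodule \<Rightarrow> ('m \<Rightarrow> 'n) \<Rightarrow> bool" where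
  "linear_map M N h \<longleftrightarrow>
     (\<forall>x\<in>carrier M. h x \<in> carrier N) \<and>
     (\<forall>x\<in>carrier M. \<forall>y\<in>carrier M. h (madd M x y) = madd N (h x) (h y)) \<and>
     (\<forall>r. \<forall>x\<in>carrier M. h (msmult M r x) = msmult N r (h x))"

definition Ker ::
  "('s, 'm) semimodule \<Rightarrow> ('s, 'n) semimodule \<Rightarrow> ('m \<Rightarrow> 'n) \<Rightarrow> 'm set" where
  "Ker M N h = {x \<in> carrier M. h x = mzero N}"

definition k_normal ::
  "('s, 'm) semimodule \<Rightarrow> ('s, 'n) semimodule \<Rightarrow> ('m \<Rightarrow> 'n) \<Rightarrow> bool" where
  "k_normal M N h \<longleftrightarrow>
     (\<forall>x\<in>carrier M. \<forall>x'\<in>carrier M. h x = h x' \<longrightarrow>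
        (\<exists>k\<in>Ker M N h. \<exists>k'\<in>Ker M N h. madd M x k = madd M x' k'))"

definition normal_epi ::
  "('s::semiring_1, 'm) semimodule \<Rightarrow> ('s, 'n) semimodule \<Rightarrow> ('m \<Rightarrow> 'n) \<Rightarrow> bool" where
  "normal_epi M N h \<longleftrightarrow> linear_map M N h \<and> h ` carrier M = carrier N \<and> k_normal M N h"

definition short_exact ::
  "('s::semiring_1, 'a) semimodule \<Rightarrow> ('s, 'b) semimodule \<Rightarrow> ('s, 'c) semimodule
   \<Rightarrow> ('a \<Rightarrow> 'b) \<Rightarrow> ('b \<Rightarrow> 'c) \<Rightarrow> bool" where
  "short_exact A B C f g \<longleftrightarrow>
     linear_map A B f \<and> linear_map B C g \<and>
     inj_on f (carrier A) \<and> f ` carrier A = Ker B C g \<and>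
     g ` carrier B = carrier C \<and> k_normal B C g"

text \<open>k-projectivity, with the universes (types) of the semimodules M and N made explicit.\<close>
definition k_projective ::
  "'m itself \<Rightarrow> 'n itself \<Rightarrow> ('s::semiring_1, 'p) semimodule \<Rightarrow> bool" where
  "k_projective _ _ P \<longleftrightarrow>
     (\<forall>(M::('s, 'm) semimodule) (N::('s, 'n) semimodule) f g.
        is_semimodule M \<longrightarrow> is_semimodule N \<longrightarrow> normal_epi M N f \<longrightarrow> linear_map P N g \<longrightarrow>
        (\<exists>h. linear_map P M h \<and> (\<forall>x\<in>carrier P. f (h x) = g x)))"

definition ses_right_split ::
  "'a itself \<Rightarrow> 'b itself \<Rightarrow> ('s::semiring_1, 'p) semimodule \<Rightarrow> bool" where
  "ses_right_split _ _ P \<longleftrightarrow>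
     (\<forall>(A::('s, 'a) semimodule) (B::('s, 'b) semimodule) f g.
        is_semimodule A \<longrightarrow> is_semimodule B \<longrightarrow> short_exact A B P f g \<longrightarrow>
        (\<exists>g'. linear_map P B g' \<and> (\<forall>x\<in>carrier P. g (g' x) = x)))"

end

theory Submission
  imports Defs
begin

(* If P is k-projective, lifting the identity of P along the normal epimorphism B -> P
   of a short exact sequence splits it. Conversely, given a normal epimorphism f : M -> N
   and g : P -> N, the projection of the pullback B = M x_N P onto P is again a normal
   epimorphism, and its kernel gives a short exact sequence 0 -> A -> B -> P -> 0;
   a splitting P -> B followed by the projection to M is the required lift of g. *)

definition subsemimodule :: "'m set \<Rightarrow> ('s::semiring_1, 'm) semimodule \<Rightarrow> bool" where
  "subsemimodule S M \<longleftrightarrow>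
     S \<subseteq> carrier M \<and> mzero M \<in> S \<and>
     (\<forall>x\<in>S. \<forall>y\<in>S. madd M x y \<in> S) \<and> (\<forall>r. \<forall>x\<in>S. msmult M r x \<in> S)"

lemma is_semimodule_restrict_carrier:
  assumes "is_semimodule M" and "subsemimodule S M"
  shows "is_semimodule (M\<lparr>carrier := S\<rparr>)"
  using assms unfolding is_semimodule_def subsemimodule_def
  by (simp (no_asm)) (meson subsetD)

definition direct_sum ::
  "('s::semiring_1, 'm) semimodule \<Rightarrow> ('s, 'p) semimodule \<Rightarrow> ('s, 'm \<times> 'p) semimodule" where
  "direct_sum M P = \<lparr>carrier = carrier M \<times> carrier P, mzero = (mzero M, mzero P),
     madd = (\<lambda>x y. (madd M (fst x) (fst y), madd P (snd x) (snd y))),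
     msmult = (\<lambda>r x. (msmult M r (fst x), msmult P r (snd x)))\<rparr>"

lemma is_semimodule_direct_sum:
  assumes "is_semimodule M" and "is_semimodule P"
  shows "is_semimodule (direct_sum M P)"
  using assms unfolding is_semimodule_def direct_sum_def
  by (simp (no_asm) add: prod_eq_iff) (elim conjE; intro conjI ballI allI; simp)

lemma linear_map_zero:
  assumes "is_semimodule M" "is_semimodule N" "linear_map M N h"
  shows "h (mzero M) = mzero N"
proof -
  have z: "mzero M \<in> carrier M" "msmult M 0 (mzero M) = mzero M"
    using assms(1) unfolding is_semimodule_def by auto
  have "h (mzero M) = h (msmult M 0 (mzero M))" using z by simp
  also have "\<dots> = msmult N 0 (h (mzero M))" using assms(3) z unfolding linear_map_def by blast
  also have "\<dots> = mzero N" using assms(2,3) z unfolding is_semimodule_def linear_map_def by blast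
  finally show ?thesis .
qed

lemma subsemimodule_Ker:
  assumes M: "is_semimodule M" and N: "is_semimodule N" and h: "linear_map M N h"
  shows "subsemimodule (Ker M N h) M"
proof -
  have "madd N (mzero N) (mzero N) = mzero N" and "\<And>r. msmult N r (mzero N) = mzero N"
    using N unfolding is_semimodule_def by auto
  then show ?thesis
    using M h linear_map_zero[OF M N h]
    unfolding subsemimodule_def Ker_def is_semimodule_def linear_map_def by auto
qed

lemma linear_map_id: "linear_map M M id"
  unfolding linear_map_def by simp

lemma short_exact_Ker_inclusion:
  assumes "is_semimodule B" "is_semimodule C" "normal_epi B C g"
  shows "short_exact (B\<lparr>carrier := Ker B C g\<rparr>) B C id g"
  using assms unfolding short_exact_def normal_epi_def linear_map_def Ker_def by auto

definition pullback ::
  "('s::semiring_1, 'm) semimodule \<Rightarrow> ('s, 'p) semimodule \<Rightarrow> ('m \<Rightarrow> 'n) \<Rightarrow> ('p \<Rightarrow> 'n)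
   \<Rightarrow> ('s, 'm \<times> 'p) semimodule" where
  "pullback M P f g =
     (direct_sum M P)\<lparr>carrier := {x \<in> carrier M \<times> carrier P. f (fst x) = g (snd x)}\<rparr>"

lemma carrier_pullback [simp]:
  "carrier (pullback M P f g) = {x \<in> carrier M \<times> carrier P. f (fst x) = g (snd x)}"
  by (simp add: pullback_def)

lemma is_semimodule_pullback:
  assumes M: "is_semimodule M" and P: "is_semimodule P" and N: "is_semimodule N"
    and f: "linear_map M N f" and g: "linear_map P N g"
  shows "is_semimodule (pullback M P f g)"
  unfolding pullback_def
proof (rule is_semimodule_restrict_carrier)
  show "is_semimodule (direct_sum M P)" using M P by (rule is_semimodule_direct_sum)
  show "subsemimodule {x \<in> carrier M \<times> carrier P. f (fst x) = g (snd x)} (direct_sum M P)"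
    using M P f g linear_map_zero[OF M N f] linear_map_zero[OF P N g]
    unfolding subsemimodule_def direct_sum_def is_semimodule_def linear_map_def by auto
qed

text \<open>The k-normality of the projection comes from that of f: a witness pair k, k'
for f becomes the pair (k, 0), (k', 0) in the kernel of the projection.\<close>

lemma normal_epi_pullback_snd:
  assumes M: "is_semimodule M" and P: "is_semimodule P" and N: "is_semimodule N"
    and f: "normal_epi M N f" and g: "linear_map P N g"
  shows "normal_epi (pullback M P f g) P snd"
  unfolding normal_epi_def
proof (intro conjI)
  let ?B = "pullback M P f g"
  have f_lin: "linear_map M N f" using f unfolding normal_epi_def by blast
  show "linear_map ?B P snd"
    unfolding linear_map_def pullback_def direct_sum_def by auto
  show "snd ` carrier ?B = carrier P"
  proof (intro equalityI subsetI)
    fix p assume p: "p \<in> carrier P"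
    then have "g p \<in> f ` carrier M"
      using f g unfolding normal_epi_def linear_map_def by auto
    then obtain m where "m \<in> carrier M" "f m = g p" by auto
    with p show "p \<in> snd ` carrier ?B" by force
  qed auto
  show "k_normal ?B P snd"
    unfolding k_normal_def
  proof (intro ballI impI)
    fix x x' assume x: "x \<in> carrier ?B" and x': "x' \<in> carrier ?B" and eq: "snd x = snd x'"
    then have "f (fst x) = f (fst x')" "fst x \<in> carrier M" "fst x' \<in> carrier M" by auto
    then obtain k k' where k: "k \<in> Ker M N f" "k' \<in> Ker M N f"
      and kk: "madd M (fst x) k = madd M (fst x') k'"
      using f unfolding normal_epi_def k_normal_def by blast
    have Pz: "mzero P \<in> carrier P" using P unfolding is_semimodule_def by blast
    have in_Ker: "(k, mzero P) \<in> Ker ?B P snd" "(k', mzero P) \<in> Ker ?B P snd"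
      using k Pz linear_map_zero[OF P N g] unfolding Ker_def by auto
    have "madd P (snd x) (mzero P) = snd x"
      using P x Pz unfolding is_semimodule_def by auto
    then have "madd ?B x (k, mzero P) = madd ?B x' (k', mzero P)"
      using kk eq by (simp add: pullback_def direct_sum_def prod_eq_iff)
    with in_Ker show "\<exists>k\<in>Ker ?B P snd. \<exists>k'\<in>Ker ?B P snd. madd ?B x k = madd ?B x' k'"
      by blast
  qed
qed

lemma lift_from_pullback_section:
  assumes "linear_map P (pullback M P f g) s" and "\<forall>x\<in>carrier P. snd (s x) = x"
  shows "linear_map P M (fst \<circ> s)" and "\<forall>x\<in>carrier P. f (fst (s x)) = g x"
  using assms unfolding linear_map_def pullback_def direct_sum_def by auto

lemma k_projective_imp_ses_right_split:
  assumes P: "is_semimodule P" and kp: "k_projective TYPE('b) TYPE('p) P"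
  shows "ses_right_split TYPE('a) TYPE('b) (P :: ('s::semiring_1, 'p) semimodule)"
  unfolding ses_right_split_def
proof (intro allI impI)
  fix A :: "('s, 'a) semimodule" and B :: "('s, 'b) semimodule" and f g
  assume "is_semimodule A" "is_semimodule B" "short_exact A B P f g"
  then have "is_semimodule B" "normal_epi B P g"
    unfolding short_exact_def normal_epi_def by blast+
  from kp[unfolded k_projective_def, rule_format, OF this(1) P this(2) linear_map_id]
  show "\<exists>g'. linear_map P B g' \<and> (\<forall>x\<in>carrier P. g (g' x) = x)" by simp
qed

lemma ses_right_split_imp_k_projective:
  assumes P: "is_semimodule P" and split: "ses_right_split TYPE('m \<times> 'p) TYPE('m \<times> 'p) P"
  shows "k_projective TYPE('m) TYPE('n) (P :: ('s::semiring_1, 'p) semimodule)"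
  unfolding k_projective_def
proof (intro allI impI)
  fix M :: "('s, 'm) semimodule" and N :: "('s, 'n) semimodule" and f g
  assume M: "is_semimodule M" and N: "is_semimodule N"
    and f: "normal_epi M N f" and g: "linear_map P N g"
  let ?B = "pullback M P f g"
  have B: "is_semimodule ?B"
    using is_semimodule_pullback[OF M P N _ g] f unfolding normal_epi_def by blast
  have epi: "normal_epi ?B P snd" using normal_epi_pullback_snd[OF M P N f g] .
  have A: "is_semimodule (?B\<lparr>carrier := Ker ?B P snd\<rparr>)"
    using B P epi subsemimodule_Ker is_semimodule_restrict_carrier
    unfolding normal_epi_def by blast
  obtain s where "linear_map P ?B s" "\<forall>x\<in>carrier P. snd (s x) = x"
    using split[unfolded ses_right_split_def, rule_format,
        OF A B short_exact_Ker_inclusion[OF B P epi]] by blast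
  from lift_from_pullback_section[OF this]
  show "\<exists>h. linear_map P M h \<and> (\<forall>x\<in>carrier P. f (h x) = g x)" by auto
qed

theorem mainTheorem8:
  fixes P :: "('s::semiring_1, 'p) semimodule"
  assumes "is_semimodule P"
  shows "(k_projective TYPE('b) TYPE('p) P \<longrightarrow> ses_right_split TYPE('a) TYPE('b) P) \<and>
         (ses_right_split TYPE('m \<times> 'p) TYPE('m \<times> 'p) P \<longrightarrow> k_projective TYPE('m) TYPE('n) P)"
  using k_projective_imp_ses_right_split[OF assms] ses_right_split_imp_k_projective[OF assms]
  by blast

end
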